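(* Let $m\ge2$ be such that $m+1$ is a power of $2$, and let $f$ be the two-digit base-$m$ Kaprekar map on $X=\{0,\dots,m^2-1\}$. Then $K(x)=\{0\}$ for every $x\in X$.
   Context: For an integer $m\ge2$, $X=\{0,1,\dots,m^2-1\}$, each element written with exactly two base-$m$ digits (leading zeros allowed); $f(x)=D(x)-A(x)$ where $D(x)$ (resp. $A(x)$) has the digits of $x$ in nonincreasing (resp. nondecreasing) order. The step $S(x)$ is the least $s\ge0$ such that $f^{s+t}(x)=f^s(x)$ for some $t\ge1$; $T(x)$ is the least $t\ge1$ with $f^{S(x)+t}(x)=f^{S(x)}(x)$; the fixed set of $x$ is $K(x)=\{f^{S(x)+i}(x):0\le i<T(x)\}$. *)

theory Defs
  imports Main
begin

definition kapD :: "nat \<Rightarrow> nat \<Rightarrow> nat" where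
  "kapD m x = max (x div m) (x mod m) * m + min (x div m) (x mod m)"

definition kapA :: "nat \<Rightarrow> nat \<Rightarrow> nat" where
  "kapA m x = min (x div m) (x mod m) * m + max (x div m) (x mod m)"

definition kap :: "nat \<Rightarrow> nat \<Rightarrow> nat" where
  "kap m x = kapD m x - kapA m x"

definition kapS :: "nat \<Rightarrow> nat \<Rightarrow> nat" where
  "kapS m x = (LEAST s. \<exists>t\<ge>1. (kap m ^^ (s + t)) x = (kap m ^^ s) x)"

definition kapT :: "nat \<Rightarrow> nat \<Rightarrow> nat" where
  "kapT m x = (LEAST t. t \<ge> 1 \<and> (kap m ^^ (kapS m x + t)) x = (kap m ^^ kapS m x) x)"

definition kapK :: "nat \<Rightarrow> nat \<Rightarrow> nat set" where
  "kapK m x = {(kap m ^^ (kapS m x + i)) x | i. i < kapT m x}"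

end

theory Submission
  imports Defs
begin

text \<open>A two-digit number with digits \<open>a, b\<close> is mapped to \<open>\<bar>a - b\<bar> (m - 1)\<close>. On the multiples
  \<open>d (m - 1)\<close>, whose digits are \<open>d - 1\<close> and \<open>m - d\<close>, the map therefore acts as
  \<open>d \<mapsto> \<bar>m + 1 - 2 d\<bar>\<close>. When \<open>m + 1 = 2\<^sup>k\<close>, each application of this map at least doubles
  the power of 2 dividing \<open>d\<close>, so after \<open>k\<close> steps \<open>d\<close> is a multiple of \<open>m + 1\<close> below \<open>m + 1\<close>,
  i.e. \<open>0\<close>. Every orbit thus ends in the fixed point \<open>0\<close>, which is then the whole cycle.\<close>

lemma funpow_fixed_point_absorbs:
  assumes "f z = z" "(f ^^ N) x = z" "N \<le> n"
  shows "(f ^^ n) x = z"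
proof -
  have "(f ^^ j) z = z" for j
    using assms(1) by (induction j) auto
  then show ?thesis
    using assms(2,3) by (metis funpow_add le_add_diff_inverse2 comp_apply)
qed

lemma funpow_periodic:
  fixes f :: "'a \<Rightarrow> 'a"
  assumes "(f ^^ (s + t)) x = (f ^^ s) x"
  shows "(f ^^ (s + j * t)) x = (f ^^ s) x"
proof (induction j)
  case (Suc j)
  have "(f ^^ (s + Suc j * t)) x = (f ^^ (t + (s + j * t))) x"
    by (simp add: algebra_simps)
  also have "\<dots> = (f ^^ t) ((f ^^ (s + j * t)) x)"
    by (simp only: funpow_add o_apply)
  also have "\<dots> = (f ^^ (t + s)) x"
    using Suc by (simp only: funpow_add o_apply)
  finally show ?case
    using assms by (simp add: add.commute)
qed simp

lemma periodic_orbit_point_eq_fixed_point: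
  assumes "f z = z" "(f ^^ N) x = z"
    and "t \<ge> 1" "(f ^^ (s + t)) x = (f ^^ s) x"
  shows "(f ^^ s) x = z"
proof -
  have "N \<le> s + N * t"
    using \<open>t \<ge> 1\<close> by (metis le_add2 mult.right_neutral mult_le_mono2 order_trans)
  then show ?thesis
    using funpow_periodic[OF assms(4), of N] funpow_fixed_point_absorbs[OF assms(1,2)] by simp
qed

lemma kap_eq_digit_diff:
  "kap m x = (max (x div m) (x mod m) - min (x div m) (x mod m)) * (m - 1)"
proof -
  define p where "p = max (x div m) (x mod m)"
  define q where "q = min (x div m) (x mod m)"
  have "q \<le> p"
    unfolding p_def q_def by simp
  then obtain r where "p = q + r"
    using le_Suc_ex by blast
  then have "(p * m + q) - (q * m + p) = (p - q) * (m - 1)"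
    by (cases m) (auto simp: algebra_simps)
  then show ?thesis
    unfolding kap_def kapD_def kapA_def p_def q_def by simp
qed

lemma kap_zero [simp]: "kap m 0 = 0"
  by (simp add: kap_eq_digit_diff)

definition kap_diff :: "nat \<Rightarrow> nat \<Rightarrow> nat" where
  "kap_diff m d = (if d = 0 then 0 else if 2 * d \<le> m + 1 then m + 1 - 2 * d else 2 * d - (m + 1))"

lemma kap_diff_le:
  assumes "d \<le> m - 1"
  shows "kap_diff m d \<le> m - 1"
  using assms unfolding kap_diff_def by auto

lemma kap_multiple:
  assumes "m \<ge> 2" "d \<le> m - 1"
  shows "kap m (d * (m - 1)) = kap_diff m d * (m - 1)"
proof (cases "d = 0")
  case False
  have "d * (m - 1) = (d - 1) * m + (m - d)"
    using False assms by (cases d; cases m) (auto simp: algebra_simps)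
  moreover have "m - d < m"
    using False assms by simp
  ultimately have "d * (m - 1) div m = d - 1" "d * (m - 1) mod m = m - d"
    by simp_all
  then show ?thesis
    using False assms unfolding kap_eq_digit_diff kap_diff_def by (auto simp: max_def min_def)
qed (simp add: kap_diff_def)

lemma kap_funpow_multiple:
  assumes "m \<ge> 2" "d \<le> m - 1"
  shows "(kap m ^^ n) (d * (m - 1)) = (kap_diff m ^^ n) d * (m - 1)"
  using assms(2)
proof (induction n arbitrary: d)
  case (Suc n)
  then show ?case
    using kap_multiple[OF assms(1) Suc.prems] kap_diff_le[OF Suc.prems]
    by (simp del: funpow.simps add: funpow_Suc_right)
qed simp

lemma kap_diff_dvd:
  assumes "m + 1 = 2 ^ k" "Suc j \<le> k" "2 ^ j dvd d"
  shows "2 ^ Suc j dvd kap_diff m d"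
proof -
  have "2 ^ Suc j dvd m + 1"
    using assms(1,2) by (metis le_imp_power_dvd)
  moreover have "2 ^ Suc j dvd 2 * d"
    using assms(3) by simp
  ultimately show ?thesis
    unfolding kap_diff_def by (auto intro: dvd_diff_nat)
qed

lemma kap_diff_funpow_dvd:
  assumes "m + 1 = 2 ^ k" "n \<le> k"
  shows "2 ^ n dvd (kap_diff m ^^ n) d"
  using assms(2)
proof (induction n)
  case (Suc n)
  then show ?case
    using kap_diff_dvd[OF assms(1)] by simp
qed simp

lemma kap_diff_funpow_eq_zero:
  assumes "m + 1 = 2 ^ k" "d \<le> m - 1"
  shows "(kap_diff m ^^ k) d = 0"
proof -
  have "(kap_diff m ^^ k) d \<le> m - 1"
    using assms(2) by (induction k) (auto intro: kap_diff_le[simplified])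
  then have "(kap_diff m ^^ k) d < 2 ^ k"
    using assms(1) by linarith
  then show ?thesis
    using kap_diff_funpow_dvd[OF assms(1) order_refl, of d] nat_dvd_not_less by blast
qed

lemma kap_funpow_eq_zero:
  assumes "m \<ge> 2" "m + 1 = 2 ^ k" "x < m ^ 2"
  shows "(kap m ^^ Suc k) x = 0"
proof -
  define d where "d = max (x div m) (x mod m) - min (x div m) (x mod m)"
  have "x div m < m"
    using assms(3) by (simp add: power2_eq_square less_mult_imp_div_less)
  moreover have "x mod m < m"
    using assms(1) by simp
  ultimately have d: "d \<le> m - 1"
    unfolding d_def by linarith
  have "(kap m ^^ Suc k) x = (kap m ^^ k) (d * (m - 1))"
    by (simp del: funpow.simps add: funpow_Suc_right kap_eq_digit_diff d_def)
  also have "\<dots> = 0"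
    using kap_funpow_multiple[OF assms(1) d] kap_diff_funpow_eq_zero[OF assms(2) d] by simp
  finally show ?thesis .
qed

theorem corollary3p3p2:
  fixes m x :: nat
  assumes "m \<ge> 2" and "\<exists>k. m + 1 = 2 ^ k" and "x < m ^ 2"
  shows "kapK m x = {0}"
proof -
  obtain N where N: "(kap m ^^ N) x = 0"
    using assms kap_funpow_eq_zero by blast
  have "\<exists>t\<ge>1. (kap m ^^ (kapS m x + t)) x = (kap m ^^ kapS m x) x"
    unfolding kapS_def
    by (rule LeastI[of _ N]) (use funpow_fixed_point_absorbs[OF kap_zero N] in auto)
  then have cycle_start: "(kap m ^^ kapS m x) x = 0"
    using periodic_orbit_point_eq_fixed_point[OF kap_zero N] by blast
  have "kapT m x = 1"
    unfolding kapT_def by (rule Least_equality) (auto simp: cycle_start)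
  then show ?thesis
    unfolding kapK_def using cycle_start by auto
qed

end
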